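(* Let $n\ge q\ge1$, $L\ge1$, and let $B_1,\dots,B_r\subseteq[n]$ be fixed sets with $|B_j|\le L$. For sets $K_1,\dots,K_k\in\binom{[n]}{q}$, let $G$ be the intersection graph on the $k+r$ labeled objects $K_1,\dots,K_k,B_1,\dots,B_r$, with an edge between two objects iff their sets intersect. Then: (1) If $x\in[n]$ is fixed, the number of ordered $k$-tuples $(K_1,\dots,K_k)\in\binom{[n]}{q}^k$ such that $x\in\big(\bigcup_i K_i\big)\cup\big(\bigcup_j B_j\big)$ and $G$ is connected is at most $\binom{n-1}{q-1}^{k}(kq+rL)^{k+r-1}$. (2) If $k\ge1$ and $K_1\in\binom{[n]}{q}$ is fixed, the number of ordered $(k-1)$-tuples $(K_2,\dots,K_k)$ such that $G$ is connected is at most $q\binom{n-1}{q-1}^{k-1}(kq+rL)^{k+r-2}$. (3) If $k\ge2$, $e\in\{2,\dots,k\}$ is fixed and $K_1\in\binom{[n]}{q}$ is fixed, the number of ordered $(k-2)$-tuples $(K_2,\dots,K_{e-1},K_{e+1},\dots,K_k)$ such that, with $K_e=K_1$, $G$ is connected is at most $q\binom{n-1}{q-1}^{k-2}(kq+rL)^{k+r-3}$. (4) If $k\ge1$, $r\ge1$, $f\in[r]$ is fixed and $K_1=B_f\in\binom{[n]}{q}$, the number of ordered $(k-1)$-tuples $(K_2,\dots,K_k)$ such that $G$ is connected is at most $q\binom{n-1}{q-1}^{k-1}(kq+rL)^{k+r-3}$. In cases (3) and (4), when $k+r=2$ the count is $1$. *)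

theory Defs
  imports Complex_Main
begin

definition qsets :: "nat \<Rightarrow> nat \<Rightarrow> nat set set" where
  "qsets n q = {K. K \<subseteq> {1..n} \<and> card K = q}"

definition inter_edges :: "nat set list \<Rightarrow> (nat \<times> nat) set" where
  "inter_edges S = {(i, j). i < length S \<and> j < length S \<and> i \<noteq> j \<and> S ! i \<inter> S ! j \<noteq> {}}"

definition inter_graph_connected :: "nat set list \<Rightarrow> bool" where
  "inter_graph_connected S \<longleftrightarrow>
     (\<forall>i<length S. \<forall>j<length S. (i, j) \<in> (inter_edges S)\<^sup>*)"

end

theory Submission
  imports Defs "HOL-Library.FuncSet"
begin

(*
  Let F be a family of q-sets, at most C of which contain any given point. Some vertices I of
  a finite vertex set V get a member of F, the others carry fixed sets B v; such an assignment
  is rooted at U if every vertex is linked to U by a chain of pairwise intersecting sets.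
  Peeling off the first layer N (the vertices whose set meets U), every free vertex of N has at
  most |U| C choices, and what remains is an assignment on V - N rooted at the union of the sets
  on N, which has at most x(N) points (x v is q on I and |B v| elsewhere). Induction on |V|
  together with the identity
    a^|V| + sum over {} < N < V of a^|N| x(N) w^(|V| - |N| - 1) = a (a + w)^(|V| - 1),  w = x(V),
  bounds the number of rooted assignments by C^|I| |U| (|U| + w)^(|V| - 1).

  A connected intersection graph is such an assignment rooted at one of its own sets, with
  that vertex (and any vertex repeating its set) removed from V. For a given root this gives
  parts (2)-(4). For part (1) take as root a set containing x: a free one (at most C choices)
  or a fixed B_j; summing over the position of the root replaces |U| by the weights x v, whose
  total is at most kq + rL.
*)

section \<open>Sums over subsets\<close>

lemma sum_Pow_binomial:
  fixes a b :: "'b :: comm_semiring_1"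
  assumes "finite A"
  shows "(\<Sum>M\<in>Pow A. a ^ card M * b ^ card (A - M)) = (a + b) ^ card A"
  using prod_add[OF assms, of "\<lambda>_. a" "\<lambda>_. b"] by simp

lemma sum_Pow_containing:
  fixes a b :: "'b :: comm_semiring_1"
  assumes "finite V" "v \<in> V"
  shows "(\<Sum>N\<in>Pow V. if v \<in> N then a ^ card N * b ^ card (V - N) else 0) = a * (a + b) ^ (card V - 1)"
proof -
  let ?W = "V - {v}"
  have "{N\<in>Pow V. v \<in> N} = insert v ` Pow ?W"
    using assms(2) by (auto intro!: image_eqI[where x = "_ - {v}"])
  moreover have "inj_on (insert v) (Pow ?W)"
    by (rule inj_onI) (metis Diff_iff PowD insert_ident singletonI subsetD)
  ultimately have "(\<Sum>N\<in>Pow V. if v \<in> N then a ^ card N * b ^ card (V - N) else 0)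
      = (\<Sum>M\<in>Pow ?W. a ^ card (insert v M) * b ^ card (V - insert v M))"
    using assms(1) by (simp add: sum.inter_filter[symmetric] sum.reindex)
  also have "\<dots> = (\<Sum>M\<in>Pow ?W. a * (a ^ card M * b ^ card (?W - M)))"
  proof (rule sum.cong[OF refl])
    fix M assume "M \<in> Pow ?W"
    then have "v \<notin> M" "finite M" "V - insert v M = ?W - M"
      using assms finite_subset by auto
    then show "a ^ card (insert v M) * b ^ card (V - insert v M) = a * (a ^ card M * b ^ card (?W - M))"
      by (simp add: mult.assoc)
  qed
  also have "\<dots> = a * (a + b) ^ (card V - 1)"
    using assms by (simp add: sum_distrib_left[symmetric] sum_Pow_binomial)
  finally show ?thesis .
qed

lemma sum_Pow_weighted:
  fixes a b :: "'b :: comm_semiring_1" and x :: "'v \<Rightarrow> 'b"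
  assumes "finite V"
  shows "(\<Sum>N\<in>Pow V. a ^ card N * sum x N * b ^ card (V - N)) = sum x V * (a * (a + b) ^ (card V - 1))"
proof -
  have "a ^ card N * sum x N * b ^ card (V - N)
      = (\<Sum>v\<in>V. x v * (if v \<in> N then a ^ card N * b ^ card (V - N) else 0))" if "N \<in> Pow V" for N
  proof -
    have "sum x N = (\<Sum>v\<in>V. if v \<in> N then x v else 0)"
      using that sum.inter_restrict[OF assms, of x N] by (simp add: Int_absorb1)
    moreover have "a ^ card N * sum x N * b ^ card (V - N) = sum x N * (a ^ card N * b ^ card (V - N))"
      by (simp add: mult_ac)
    ultimately show ?thesis by (auto simp: sum_distrib_right intro!: sum.cong)
  qed
  then have "(\<Sum>N\<in>Pow V. a ^ card N * sum x N * b ^ card (V - N))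
      = (\<Sum>v\<in>V. x v * (\<Sum>N\<in>Pow V. if v \<in> N then a ^ card N * b ^ card (V - N) else 0))"
    by (simp add: sum.swap[of _ V] sum_distrib_left)
  also have "\<dots> = sum x V * (a * (a + b) ^ (card V - 1))"
    using assms by (simp add: sum_Pow_containing sum_distrib_right)
  finally show ?thesis .
qed

lemma sum_Pow_layer_identity:
  fixes a :: "'b :: linordered_semidom" and x :: "'v \<Rightarrow> 'b"
  assumes "finite V" "V \<noteq> {}" "\<And>v. v \<in> V \<Longrightarrow> x v \<ge> 0"
  shows "a ^ card V + (\<Sum>N\<in>Pow V - {{}, V}. a ^ card N * sum x N * sum x V ^ (card V - card N - 1))
         = a * (a + sum x V) ^ (card V - 1)"
proof (cases "sum x V = 0")
  case True
  then have "\<And>v. v \<in> V \<Longrightarrow> x v = 0" using assms sum_nonneg_eq_0_iff by blast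
  then have "\<And>N. N \<subseteq> V \<Longrightarrow> sum x N = 0" by (simp add: subset_iff)
  moreover obtain m where "card V = Suc m" using assms(1,2) by (metis card_gt_0_iff gr0_implies_Suc)
  ultimately show ?thesis using True by simp
next
  case False
  define w where "w = sum x V"
  define g where "g N = a ^ card N * sum x N * w ^ card (V - N)" for N
  have w: "w > 0" using False assms unfolding w_def by (metis order_less_le sum_nonneg)
  have "w * (a ^ card N * sum x N * w ^ (card V - card N - 1)) = g N" if "N \<in> Pow V - {{}, V}" for N
  proof -
    have "card N < card V" "card (V - N) = card V - card N"
      using that assms(1) by (auto intro: psubset_card_mono simp: card_Diff_subset finite_subset)
    then have "card (V - N) = Suc (card V - card N - 1)" by simp
    then show ?thesis unfolding g_def by (simp add: mult_ac)
  qed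
  then have "w * (\<Sum>N\<in>Pow V - {{}, V}. a ^ card N * sum x N * w ^ (card V - card N - 1))
      = (\<Sum>N\<in>Pow V - {{}, V}. g N)"
    by (simp add: sum_distrib_left)
  moreover have "sum g (Pow V) = sum g (insert V (insert {} (Pow V - {{}, V})))"
    by (rule arg_cong[where f = "sum g"]) auto
  ultimately have "w * (a ^ card V
      + (\<Sum>N\<in>Pow V - {{}, V}. a ^ card N * sum x N * w ^ (card V - card N - 1))) = sum g (Pow V)"
    using assms(1,2) by (simp add: g_def w_def distrib_left mult.commute)
  also have "\<dots> = w * (a * (a + w) ^ (card V - 1))"
    unfolding g_def w_def using assms(1) by (rule sum_Pow_weighted)
  finally have "w * (a ^ card V
      + (\<Sum>N\<in>Pow V - {{}, V}. a ^ card N * sum x N * w ^ (card V - card N - 1)))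
      = w * (a * (a + w) ^ (card V - 1))" .
  moreover have "\<And>A B. w * A = w * B \<Longrightarrow> A = B"
    using w by (metis antisym order_refl mult_left_le_imp_le)
  ultimately show ?thesis unfolding w_def by blast
qed

section \<open>Assignments rooted at a set\<close>

inductive reach :: "'a set \<Rightarrow> ('v \<Rightarrow> 'a set) \<Rightarrow> 'v set \<Rightarrow> 'v \<Rightarrow> bool" for U S V where
  base: "v \<in> V \<Longrightarrow> S v \<inter> U \<noteq> {} \<Longrightarrow> reach U S V v"
| step: "reach U S V u \<Longrightarrow> v \<in> V \<Longrightarrow> S u \<inter> S v \<noteq> {} \<Longrightarrow> reach U S V v"

lemma reach_in: "reach U S V v \<Longrightarrow> v \<in> V"
  by (induction rule: reach.induct)

lemma reach_cong:
  assumes "reach U S V v" "\<And>v. v \<in> V \<Longrightarrow> S v = S' v"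
  shows "reach U S' V v"
  using assms(1) by induction (auto simp: assms(2) reach_in intro: reach.intros)

definition first_layer :: "'a set \<Rightarrow> ('v \<Rightarrow> 'a set) \<Rightarrow> 'v set \<Rightarrow> 'v set" where
  "first_layer U S V = {v \<in> V. S v \<inter> U \<noteq> {}}"

lemma first_layer_nonempty: "reach U S V v \<Longrightarrow> first_layer U S V \<noteq> {}"
  by (induction rule: reach.induct) (auto simp: first_layer_def)

lemma reach_beyond_first_layer:
  assumes "reach U S V v" "v \<notin> first_layer U S V"
  shows "reach (\<Union> (S ` first_layer U S V)) S (V - first_layer U S V) v"
  using assms
proof induction
  case (base v)
  then show ?case by (simp add: first_layer_def)
next
  case (step u v)
  show ?case
  proof (cases "u \<in> first_layer U S V")
    case True
    then show ?thesis using step by (blast intro: reach.base)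
  next
    case False
    then show ?thesis using step by (blast intro: reach.step)
  qed
qed

definition weight :: "nat \<Rightarrow> 'v set \<Rightarrow> ('v \<Rightarrow> 'a set) \<Rightarrow> 'v \<Rightarrow> nat" where
  "weight q I B v = (if v \<in> I then q else card (B v))"

lemma inj_on_restrict_split: "inj_on (\<lambda>f. (restrict f J, restrict f (I - J))) (extensional I)"
  by (rule inj_onI) (metis (no_types, lifting) DiffI extensionalityI prod.inject restrict_apply')

locale degree_bounded_family =
  fixes F :: "'a set set" and q C :: nat
  assumes finite_family: "finite F"
    and finite_member: "K \<in> F \<Longrightarrow> finite K"
    and card_member: "K \<in> F \<Longrightarrow> card K = q"
    and degree_le: "card {K \<in> F. u \<in> K} \<le> C"
begin

lemma card_meeting_le:
  assumes "finite U"
  shows "card {K \<in> F. K \<inter> U \<noteq> {}} \<le> card U * C"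
proof -
  have "card {K \<in> F. K \<inter> U \<noteq> {}} = card (\<Union>u\<in>U. {K \<in> F. u \<in> K})"
    by (rule arg_cong[where f = card]) auto
  also have "\<dots> \<le> (\<Sum>u\<in>U. card {K \<in> F. u \<in> K})"
    using assms by (rule card_UN_le)
  also have "\<dots> \<le> card U * C"
    using sum_mono[of U _ "\<lambda>_. C", OF degree_le] by simp
  finally show ?thesis .
qed

lemma card_PiE_meeting_le:
  assumes "finite J" "finite U"
  shows "card (J \<rightarrow>\<^sub>E {K \<in> F. K \<inter> U \<noteq> {}}) \<le> (card U * C) ^ card J"
  using assms by (simp add: card_PiE power_mono card_meeting_le)

definition rooted_assignments ::
    "'a set \<Rightarrow> 'v set \<Rightarrow> ('v \<Rightarrow> 'a set) \<Rightarrow> 'v set \<Rightarrow> ('v \<Rightarrow> 'a set) set" where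
  "rooted_assignments U I B V = {f \<in> I \<rightarrow>\<^sub>E F. \<forall>v\<in>V. reach U (override_on B f I) V v}"

lemma finite_rooted_assignments: "finite I \<Longrightarrow> finite (rooted_assignments U I B V)"
  unfolding rooted_assignments_def
  by (rule finite_subset[of _ "I \<rightarrow>\<^sub>E F"]) (auto intro: finite_PiE finite_family)

lemma rooted_assignments_empty_root: "V \<noteq> {} \<Longrightarrow> rooted_assignments {} I B V = {}"
  unfolding rooted_assignments_def using first_layer_nonempty by (fastforce simp: first_layer_def)

lemma card_union_assigned_le:
  assumes "g \<in> J \<rightarrow>\<^sub>E F" "finite N"
  shows "card (\<Union>v\<in>N. override_on B g J v) \<le> sum (weight q J B) N"
proof -
  have "card (\<Union>v\<in>N. override_on B g J v) \<le> (\<Sum>v\<in>N. card (override_on B g J v))"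
    using assms(2) by (rule card_UN_le)
  also have "\<dots> = sum (weight q J B) N"
    using card_member[OF PiE_mem[OF assms(1)]] by (intro sum.cong) (auto simp: weight_def)
  finally show ?thesis .
qed

lemma finite_union_assigned:
  assumes "g \<in> J \<rightarrow>\<^sub>E F" "finite N" "\<forall>v\<in>N - J. finite (B v)"
  shows "finite (\<Union>v\<in>N. override_on B g J v)"
  using assms finite_member by (auto simp: override_on_def)

lemma card_layer_le_sum:
  assumes "finite I" "N \<subseteq> V"
  shows "card {f \<in> rooted_assignments U I B V. first_layer U (override_on B f I) V = N}
    \<le> (\<Sum>g \<in> (I \<inter> N) \<rightarrow>\<^sub>E {K \<in> F. K \<inter> U \<noteq> {}}.
          card (rooted_assignments (\<Union>v\<in>N. override_on B g (I \<inter> N) v) (I - N) B (V - N)))"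
    (is "card ?X \<le> (\<Sum>g\<in>?G. card (?H g))")
proof -
  let ?split = "\<lambda>f. (restrict f (I \<inter> N), restrict f (I - (I \<inter> N)))"
  have "?split ` ?X \<subseteq> Sigma ?G ?H"
  proof (rule image_subsetI)
    fix f assume f: "f \<in> ?X"
    define S where "S = override_on B f I"
    have fF: "f \<in> I \<rightarrow>\<^sub>E F" and reach: "\<forall>v\<in>V. reach U S V v"
      and N: "first_layer U S V = N"
      using f unfolding rooted_assignments_def S_def by auto
    have "f i \<inter> U \<noteq> {}" if "i \<in> I \<inter> N" for i
      using that N unfolding first_layer_def S_def by auto
    then have g: "restrict f (I \<inter> N) \<in> ?G" using fF by auto
    have "(\<Union>v\<in>N. override_on B (restrict f (I \<inter> N)) (I \<inter> N) v) = \<Union> (S ` N)"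
      by (rule SUP_cong) (auto simp: S_def override_on_def)
    moreover have "reach (\<Union> (S ` N)) (override_on B (restrict f (I - N)) (I - N)) (V - N) v"
      if "v \<in> V - N" for v
      using reach_beyond_first_layer[of U S V v] reach that unfolding N
      by (auto simp: S_def override_on_def elim!: reach_cong)
    ultimately have "restrict f (I - N) \<in> ?H (restrict f (I \<inter> N))"
      using fF unfolding rooted_assignments_def by auto
    moreover have "I - (I \<inter> N) = I - N" by blast
    ultimately show "?split f \<in> Sigma ?G ?H" using g by simp
  qed
  moreover have "inj_on ?split ?X"
    by (rule inj_on_subset[OF inj_on_restrict_split]) (auto simp: rooted_assignments_def PiE_iff)
  moreover have "finite (Sigma ?G ?H)"
    using assms(1) finite_family by (auto intro!: finite_SigmaI finite_PiE finite_rooted_assignments)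
  ultimately have "card ?X \<le> card (Sigma ?G ?H)" by (blast intro: card_inj_on_le)
  also have "\<dots> = (\<Sum>g\<in>?G. card (?H g))"
    using assms(1) finite_family by (auto intro!: card_SigmaI finite_PiE finite_rooted_assignments)
  finally show ?thesis .
qed


lemma card_full_layer_le:
  assumes "finite V" "I \<subseteq> V" "finite U" "U \<noteq> {}"
  shows "card {f \<in> rooted_assignments U I B V. first_layer U (override_on B f I) V = V}
    \<le> C ^ card I * card U ^ card V"
proof -
  have finI: "finite I" using assms(1,2) finite_subset by blast
  have "rooted_assignments U' (I - V) B (V - V) = {\<lambda>_. undefined}" for U'
    using assms(2) by (simp add: rooted_assignments_def Diff_eq_empty_iff[THEN iffD2])
  then have "card {f \<in> rooted_assignments U I B V. first_layer U (override_on B f I) V = V}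
      \<le> card ((I \<inter> V) \<rightarrow>\<^sub>E {K \<in> F. K \<inter> U \<noteq> {}})"
    using card_layer_le_sum[OF finI, where N = V and V = V and U = U and B = B] by simp
  also have "\<dots> \<le> (card U * C) ^ card I"
    using card_PiE_meeting_le[OF finI assms(3)] assms(2) by (simp add: Int_absorb2)
  also have "\<dots> = C ^ card I * card U ^ card I"
    by (simp add: power_mult_distrib)
  also have "card U ^ card I \<le> card U ^ card V"
    using assms by (intro power_increasing card_mono) (auto simp: Suc_le_eq card_gt_0_iff)
  finally show ?thesis by simp
qed

lemma card_proper_layer_le:
  assumes "finite V" "I \<subseteq> V" "N \<subseteq> V" "finite U" "U \<noteq> {}" "\<forall>v\<in>V - I. finite (B v)"
    and inner: "\<And>U'. finite U' \<Longrightarrow> card (rooted_assignments U' (I - N) B (V - N))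
      \<le> C ^ card (I - N) * card U' * (card U' + sum (weight q I B) (V - N)) ^ (card V - card N - 1)"
  shows "card {f \<in> rooted_assignments U I B V. first_layer U (override_on B f I) V = N}
    \<le> C ^ card I * (card U ^ card N * sum (weight q I B) N * sum (weight q I B) V ^ (card V - card N - 1))"
proof -
  let ?G = "(I \<inter> N) \<rightarrow>\<^sub>E {K \<in> F. K \<inter> U \<noteq> {}}"
  let ?w = "sum (weight q I B)"
  let ?e = "card V - card N - 1"
  have finI: "finite I" and finN: "finite N" using assms(1-3) finite_subset by auto
  have split: "?w V = ?w N + ?w (V - N)"
    using assms(1,3) by (metis add.commute sum.subset_diff)
  have weight_restrict: "sum (weight q (I \<inter> N) B) N = ?w N"
    by (rule sum.cong) (auto simp: weight_def)
  have inner_le: "card (rooted_assignments (\<Union>v\<in>N. override_on B g (I \<inter> N) v) (I - N) B (V - N))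
      \<le> C ^ card (I - N) * (?w N * ?w V ^ ?e)" if g: "g \<in> ?G" for g
  proof -
    let ?U' = "\<Union>v\<in>N. override_on B g (I \<inter> N) v"
    have gF: "g \<in> (I \<inter> N) \<rightarrow>\<^sub>E F" using g by auto
    have U': "card ?U' \<le> ?w N"
      using card_union_assigned_le[OF gF finN, of B] weight_restrict by simp
    have "finite ?U'"
      using finite_union_assigned[OF gF finN] assms(3,6) by blast
    then have "card (rooted_assignments ?U' (I - N) B (V - N))
        \<le> C ^ card (I - N) * card ?U' * (card ?U' + ?w (V - N)) ^ ?e"
      by (rule inner)
    also have "\<dots> \<le> C ^ card (I - N) * ?w N * (?w N + ?w (V - N)) ^ ?e"
      using U' by (intro mult_mono power_mono add_right_mono) simp_all
    finally show ?thesis using split by (simp add: mult.assoc add.commute)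
  qed
  have G: "card ?G \<le> card U ^ card N * C ^ card (I \<inter> N)"
  proof -
    have "card ?G \<le> (card U * C) ^ card (I \<inter> N)"
      using finI assms(4) by (intro card_PiE_meeting_le) auto
    also have "\<dots> = card U ^ card (I \<inter> N) * C ^ card (I \<inter> N)"
      by (rule power_mult_distrib)
    also have "card U ^ card (I \<inter> N) \<le> card U ^ card N"
      using assms(4,5) finN by (intro power_increasing card_mono) (auto simp: Suc_le_eq card_gt_0_iff)
    finally show ?thesis by simp
  qed
  have C: "C ^ card (I \<inter> N) * C ^ card (I - N) = C ^ card I"
    by (simp add: card_Int_Diff[OF finI, of N] power_add)
  have "card {f \<in> rooted_assignments U I B V. first_layer U (override_on B f I) V = N}
      \<le> (\<Sum>g\<in>?G. card (rooted_assignments (\<Union>v\<in>N. override_on B g (I \<inter> N) v) (I - N) B (V - N)))"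
    using finI assms(3) by (rule card_layer_le_sum)
  also have "\<dots> \<le> (\<Sum>g\<in>?G. C ^ card (I - N) * (?w N * ?w V ^ ?e))"
    by (rule sum_mono) (rule inner_le)
  also have "\<dots> = card ?G * (C ^ card (I - N) * (?w N * ?w V ^ ?e))"
    by simp
  also have "\<dots> \<le> card U ^ card N * C ^ card (I \<inter> N) * (C ^ card (I - N) * (?w N * ?w V ^ ?e))"
    using G by (rule mult_right_mono) simp
  also have "\<dots> = C ^ card I * (card U ^ card N * ?w N * ?w V ^ ?e)"
    unfolding C[symmetric] by (simp only: mult_ac)
  finally show ?thesis by (simp only: mult_ac)
qed

lemma card_rooted_assignments_le_sum_layers:
  assumes "finite V" "I \<subseteq> V" "V \<noteq> {}"
  shows "card (rooted_assignments U I B V)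
    \<le> card {f \<in> rooted_assignments U I B V. first_layer U (override_on B f I) V = V}
      + (\<Sum>N \<in> Pow V - {{}, V}.
          card {f \<in> rooted_assignments U I B V. first_layer U (override_on B f I) V = N})"
proof -
  let ?X = "rooted_assignments U I B V"
  let ?layer = "\<lambda>N. {f \<in> ?X. first_layer U (override_on B f I) V = N}"
  have "?X \<subseteq> (\<Union>N \<in> Pow V - {{}}. ?layer N)"
  proof
    fix f assume f: "f \<in> ?X"
    obtain v where "v \<in> V" using assms(3) by blast
    then have "reach U (override_on B f I) V v" using f by (simp add: rooted_assignments_def)
    then have "first_layer U (override_on B f I) V \<noteq> {}" by (rule first_layer_nonempty)
    moreover have "first_layer U (override_on B f I) V \<subseteq> V" by (auto simp: first_layer_def)
    ultimately show "f \<in> (\<Union>N \<in> Pow V - {{}}. ?layer N)" using f by blast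
  qed
  moreover have "finite ?X"
    using assms(1,2) finite_subset by (blast intro: finite_rooted_assignments)
  ultimately have "card ?X \<le> card (\<Union>N \<in> Pow V - {{}}. ?layer N)"
    using assms(1) by (intro card_mono) auto
  also have "\<dots> \<le> (\<Sum>N \<in> Pow V - {{}}. card (?layer N))"
    using assms(1) by (intro card_UN_le) simp
  also have "\<dots> = card (?layer V) + (\<Sum>N \<in> Pow V - {{}} - {V}. card (?layer N))"
    using assms(1,3) by (intro sum.remove) auto
  also have "Pow V - {{}} - {V} = Pow V - {{}, V}" by blast
  finally show ?thesis .
qed

theorem card_rooted_assignments_le:
  assumes "finite V" "I \<subseteq> V" "V \<noteq> {}" "finite U" "\<forall>v\<in>V - I. finite (B v)"
  shows "card (rooted_assignments U I B V)
    \<le> C ^ card I * card U * (card U + sum (weight q I B) V) ^ (card V - 1)"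
  using assms
proof (induction "card V" arbitrary: V I U rule: less_induct)
  case less
  show ?case
  proof (cases "U = {}")
    case True
    then show ?thesis using rooted_assignments_empty_root[OF less.prems(3)] by simp
  next
    case False
    let ?layer = "\<lambda>N. {f \<in> rooted_assignments U I B V. first_layer U (override_on B f I) V = N}"
    let ?w = "sum (weight q I B)"
    let ?a = "card U"
    have inner: "card (rooted_assignments U' (I - N) B (V - N))
        \<le> C ^ card (I - N) * card U' * (card U' + ?w (V - N)) ^ (card V - card N - 1)"
      if N: "N \<in> Pow V - {{}, V}" and U': "finite U'" for N U'
    proof -
      have "card (V - N) < card V" "card (V - N) = card V - card N"
        using N less.prems(1) by (auto intro: psubset_card_mono simp: card_Diff_subset finite_subset)
      moreover have "sum (weight q (I - N) B) (V - N) = ?w (V - N)"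
        by (rule sum.cong) (auto simp: weight_def)
      moreover have "V - N \<noteq> {}" using N by auto
      ultimately show ?thesis
        using less.hyps[of "V - N" "I - N" U'] less.prems U' by auto
    qed
    have proper: "card (?layer N) \<le> C ^ card I * (?a ^ card N * ?w N * ?w V ^ (card V - card N - 1))"
      if "N \<in> Pow V - {{}, V}" for N
      using that
      by (intro card_proper_layer_le[OF less.prems(1,2) _ less.prems(4) False less.prems(5)] inner) auto
    have "card (rooted_assignments U I B V)
        \<le> card (?layer V) + (\<Sum>N \<in> Pow V - {{}, V}. card (?layer N))"
      using less.prems(1-3) by (rule card_rooted_assignments_le_sum_layers)
    also have "\<dots> \<le> C ^ card I * ?a ^ card V
        + (\<Sum>N \<in> Pow V - {{}, V}. C ^ card I * (?a ^ card N * ?w N * ?w V ^ (card V - card N - 1)))"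
      using card_full_layer_le[OF less.prems(1,2,4) False] proper by (intro add_mono sum_mono) auto
    also have "\<dots> = C ^ card I * (?a ^ card V
        + (\<Sum>N \<in> Pow V - {{}, V}. ?a ^ card N * ?w N * ?w V ^ (card V - card N - 1)))"
      by (simp add: distrib_left sum_distrib_left)
    also have "\<dots> = C ^ card I * (?a * (?a + ?w V) ^ (card V - 1))"
      using less.prems(1,3) by (subst sum_Pow_layer_identity) auto
    finally show ?thesis by (simp only: mult.assoc)
  qed
qed

end

section \<open>Connected intersection graphs of lists\<close>

lemma reach_of_inter_graph_connected:
  assumes conn: "inter_graph_connected S" and rt: "rt < length S"
    and dup: "\<And>d. d \<in> D \<Longrightarrow> S ! d = S ! rt"
    and u: "u \<in> {..<length S} - insert rt D"
  shows "reach (S ! rt) (nth S) ({..<length S} - insert rt D) u"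
proof -
  let ?V = "{..<length S} - insert rt D"
  have "y \<in> insert rt D \<or> reach (S ! rt) (nth S) ?V y" if "(rt, y) \<in> (inter_edges S)\<^sup>*" for y
    using that
  proof (induction rule: rtrancl_induct)
    case base
    then show ?case by simp
  next
    case (step y z)
    then have z: "z < length S" "S ! y \<inter> S ! z \<noteq> {}" unfolding inter_edges_def by auto
    show ?case
    proof (cases "z \<in> insert rt D")
      case False
      then have "z \<in> ?V" using z by auto
      moreover have "S ! z \<inter> S ! rt \<noteq> {}" if "y \<in> insert rt D"
        using that z dup by (auto simp: Int_commute)
      ultimately show ?thesis using step.IH z by (auto intro: reach.intros)
    qed simp
  qed
  moreover have "(rt, u) \<in> (inter_edges S)\<^sup>*"
    using conn rt u unfolding inter_graph_connected_def by blast
  ultimately show ?thesis using u by blast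
qed

lemma inter_graph_connected_pair:
  assumes "K \<noteq> {}"
  shows "inter_graph_connected [K, K]"
proof -
  have "(i, j) \<in> (inter_edges [K, K])\<^sup>*" if "i < 2" "j < 2" for i j
  proof (cases "i = j")
    case False
    then have "(i, j) \<in> inter_edges [K, K]"
      using that assms by (auto simp: inter_edges_def less_2_cases_iff)
    then show ?thesis by blast
  qed simp
  then show ?thesis unfolding inter_graph_connected_def by simp
qed

lemma sum_weight:
  assumes "finite V" "I \<subseteq> V"
  shows "sum (weight q I B) V = q * card I + (\<Sum>v\<in>V - I. card (B v))"
proof -
  have "sum (weight q I B) V = sum (weight q I B) I + sum (weight q I B) (V - I)"
    using assms by (metis add.commute sum.subset_diff)
  then show ?thesis by (simp add: weight_def)
qed

lemma sum_card_nth_le: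
  assumes "W \<subseteq> {k..<k + length Bs}" "\<forall>B\<in>set Bs. card B \<le> L"
  shows "(\<Sum>v\<in>W. card (Bs ! (v - k))) \<le> card W * L"
  using sum_mono[of W "\<lambda>v. card (Bs ! (v - k))" "\<lambda>_. L"] assms by force

lemma sum_weight_le:
  assumes "finite V" "I \<subseteq> V" "V - I \<subseteq> {k..<k + length Bs}" "\<forall>B\<in>set Bs. card B \<le> L"
  shows "sum (weight q I (\<lambda>v. Bs ! (v - k))) V \<le> q * card I + card (V - I) * L"
  unfolding sum_weight[OF assms(1,2)] using sum_card_nth_le[OF assms(3,4)] by simp

text \<open>A list is encoded by its entries at the free positions I, the other vertices carrying the
  fixed sets B v; the root set R sits at position rt and is repeated at the positions D, which
  are therefore not vertices.\<close>

lemma card_connected_lists_le: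
  fixes LL :: "'b \<Rightarrow> nat set list"
  assumes "degree_bounded_family F q C" "finite R"
    and lists: "\<And>Ts. Ts \<in> A \<Longrightarrow> length (LL Ts) = m \<and> inter_graph_connected (LL Ts)"
    and root: "rt < m" "\<And>Ts d. Ts \<in> A \<Longrightarrow> d \<in> insert rt D \<Longrightarrow> LL Ts ! d = R"
    and V: "V = {..<m} - insert rt D" "V \<noteq> {}" "I \<subseteq> V"
    and free: "\<And>Ts i. Ts \<in> A \<Longrightarrow> i \<in> I \<Longrightarrow> LL Ts ! i \<in> F"
    and fixed: "\<And>Ts v. Ts \<in> A \<Longrightarrow> v \<in> V - I \<Longrightarrow> LL Ts ! v = B v" "\<forall>v\<in>V - I. finite (B v)"
    and inj: "inj_on LL A"
    and bound: "card R + sum (weight q I B) V \<le> M"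
  shows "card A \<le> C ^ card I * card R * M ^ (card V - 1)"
proof -
  interpret degree_bounded_family F q C by fact
  let ?f = "\<lambda>Ts. restrict (nth (LL Ts)) I"
  have finV: "finite V" using V(1) by simp
  have "?f ` A \<subseteq> rooted_assignments R I B V"
  proof (rule image_subsetI)
    fix Ts assume Ts: "Ts \<in> A"
    have "reach R (nth (LL Ts)) V v" if "v \<in> V" for v
      using reach_of_inter_graph_connected[of "LL Ts" rt D v] lists[OF Ts] root(2)[OF Ts] root(1) V(1) that
      by auto
    moreover have "LL Ts ! v = override_on B (?f Ts) I v" if "v \<in> V" for v
      using that fixed(1)[OF Ts] by (auto simp: override_on_def)
    ultimately show "?f Ts \<in> rooted_assignments R I B V"
      using free[OF Ts] by (auto simp: rooted_assignments_def intro: reach_cong)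
  qed
  moreover have "inj_on ?f A"
  proof (rule inj_onI)
    fix Ts Ts' assume Ts: "Ts \<in> A" "Ts' \<in> A" and eq: "?f Ts = ?f Ts'"
    have "LL Ts = LL Ts'"
    proof (rule nth_equalityI)
      show "length (LL Ts) = length (LL Ts')" using lists Ts by simp
      fix i assume "i < length (LL Ts)"
      then consider "i \<in> insert rt D" | "i \<in> I" | "i \<in> V - I"
        using lists[OF Ts(1)] V(1) by auto
      then show "LL Ts ! i = LL Ts' ! i"
        by cases (use root(2) fixed(1) Ts fun_cong[OF eq, of i] in auto)
    qed
    then show "Ts = Ts'" using inj Ts by (simp add: inj_on_def)
  qed
  moreover have "finite (rooted_assignments R I B V)"
    using V(3) finV by (blast intro: finite_rooted_assignments finite_subset)
  ultimately have "card A \<le> card (rooted_assignments R I B V)"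
    by (blast intro: card_inj_on_le)
  also have "\<dots> \<le> C ^ card I * card R * (card R + sum (weight q I B) V) ^ (card V - 1)"
    using finV V(3,2) assms(2) fixed(2) by (rule card_rooted_assignments_le)
  also have "\<dots> \<le> C ^ card I * card R * M ^ (card V - 1)"
    using bound by (simp add: power_mono)
  finally show ?thesis .
qed

lemma nth_Cons_append:
  assumes "length Xs = k - 1" "1 \<le> k"
  shows "((R # Xs) @ Bs) ! i = (if i = 0 then R else if i < k then Xs ! (i - 1) else Bs ! (i - k))"
  using assms by (auto simp: nth_append nth_Cons')

lemma card_connected_Cons_extensions_le:
  assumes fam: "degree_bounded_family F q C" and Bs: "\<forall>B\<in>set Bs. finite B \<and> card B \<le> L"
    and R: "finite R" and k: "1 \<le> k"
    and D: "D \<subseteq> {k..<k + length Bs}" "\<And>d. d \<in> D \<Longrightarrow> Bs ! (d - k) = R"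
    and kr: "card D + 2 \<le> k + length Bs"
  shows "card {Ks. length Ks = k - 1 \<and> set Ks \<subseteq> F \<and> inter_graph_connected ((R # Ks) @ Bs)}
    \<le> C ^ (k - 1) * card R * (card R + q * (k - 1) + (length Bs - card D) * L)
        ^ (k + length Bs - card D - 2)"
proof -
  let ?r = "length Bs"
  let ?A = "{Ks. length Ks = k - 1 \<and> set Ks \<subseteq> F \<and> inter_graph_connected ((R # Ks) @ Bs)}"
  let ?V = "{..<k + ?r} - insert 0 D"
  let ?I = "{1..<k}"
  have finD: "finite D" using D(1) finite_subset by blast
  have VI: "?V - ?I = {k..<k + ?r} - D" using k by auto
  have "0 \<notin> D" using D(1) k by auto
  then have cV: "card ?V = k + ?r - Suc (card D)"
    using D(1) finD k by (subst card_Diff_subset) (auto simp: subset_iff)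
  have cVI: "card (?V - ?I) = ?r - card D"
    unfolding VI using D(1) finD by (simp add: card_Diff_subset)
  have "card ?A \<le> C ^ card ?I * card R * (card R + q * (k - 1) + (?r - card D) * L) ^ (card ?V - 1)"
  proof (rule card_connected_lists_le[OF fam R, where rt = 0 and D = D and B = "\<lambda>v. Bs ! (v - k)"])
    show "?V = {..<k + ?r} - insert 0 D" ..
    have "card ?V \<noteq> 0" using cV kr by simp
    then show "?V \<noteq> {}" by (metis card.empty)
    show "?I \<subseteq> ?V" "0 < k + ?r" using k D(1) by auto
    show "\<forall>v\<in>?V - ?I. finite (Bs ! (v - k))"
      using Bs unfolding VI by (auto simp: less_diff_conv2)
    show "inj_on (\<lambda>Ks. (R # Ks) @ Bs) ?A" by (rule inj_onI) simp
    have "sum (weight q ?I (\<lambda>v. Bs ! (v - k))) ?V \<le> q * card ?I + card (?V - ?I) * L"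
      using Bs D(1) by (intro sum_weight_le) (auto simp: VI)
    then show "card R + sum (weight q ?I (\<lambda>v. Bs ! (v - k))) ?V
        \<le> card R + q * (k - 1) + (?r - card D) * L"
      unfolding cVI by simp
  next
    fix Ks assume "Ks \<in> ?A"
    then have Ks: "length Ks = k - 1" "set Ks \<subseteq> F" "inter_graph_connected ((R # Ks) @ Bs)" by auto
    note nth = nth_Cons_append[OF Ks(1) k, of R Bs]
    show "length ((R # Ks) @ Bs) = k + ?r \<and> inter_graph_connected ((R # Ks) @ Bs)"
      using Ks k by simp
    show "((R # Ks) @ Bs) ! d = R" if "d \<in> insert 0 D" for d
      using that D nth[of d] k by auto
    show "((R # Ks) @ Bs) ! i \<in> F" if "i \<in> ?I" for i
      using that nth[of i] Ks(1,2) by (auto intro: subsetD[OF _ nth_mem])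
    show "((R # Ks) @ Bs) ! v = Bs ! (v - k)" if "v \<in> ?V - ?I" for v
      using that nth[of v] by auto
  qed
  then show ?thesis using cV by (simp add: numeral_2_eq_2)
qed

lemma card_connected_extensions_le:
  assumes fam: "degree_bounded_family F q C" and Bs: "\<forall>B\<in>set Bs. finite B \<and> card B \<le> L"
    and K: "K \<in> F" and k: "1 \<le> k" "2 \<le> k + length Bs"
  shows "card {Ks. length Ks = k - 1 \<and> set Ks \<subseteq> F \<and> inter_graph_connected ((K # Ks) @ Bs)}
    \<le> C ^ (k - 1) * q * (k * q + length Bs * L) ^ (k + length Bs - 2)"
proof -
  have "card K = q" "finite K"
    using K degree_bounded_family.card_member degree_bounded_family.finite_member fam by blast+
  moreover have "q + q * (k - 1) = k * q" using k by (cases k) simp_all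
  ultimately show ?thesis
    using card_connected_Cons_extensions_le[OF fam Bs _ k(1), where D = "{}" and R = K] k by (simp add: add.assoc)
qed

lemma card_connected_extensions_from_fixed_le:
  assumes fam: "degree_bounded_family F q C" and Bs: "\<forall>B\<in>set Bs. finite B \<and> card B \<le> L"
    and j: "j < length Bs" "Bs ! j \<in> F" and k: "1 \<le> k" "3 \<le> k + length Bs"
  shows "card {Ks. length Ks = k - 1 \<and> set Ks \<subseteq> F \<and> inter_graph_connected ((Bs ! j # Ks) @ Bs)}
    \<le> C ^ (k - 1) * q * (k * q + length Bs * L) ^ (k + length Bs - 3)"
proof -
  have R: "card (Bs ! j) = q" "finite (Bs ! j)"
    using j(2) degree_bounded_family.card_member degree_bounded_family.finite_member fam by blast+
  have "card {Ks. length Ks = k - 1 \<and> set Ks \<subseteq> F \<and> inter_graph_connected ((Bs ! j # Ks) @ Bs)}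
      \<le> C ^ (k - 1) * q * (q + q * (k - 1) + (length Bs - 1) * L) ^ (k + length Bs - 3)"
    using card_connected_Cons_extensions_le[OF fam Bs R(2) k(1), where D = "{k + j}"] R j k
    by (simp add: numeral_3_eq_3)
  also have "\<dots> \<le> C ^ (k - 1) * q * (k * q + length Bs * L) ^ (k + length Bs - 3)"
    using k by (intro mult_left_mono power_mono) (cases k, simp_all add: diff_mult_distrib)
  finally show ?thesis .
qed

lemma card_connected_rooted_le:
  assumes fam: "degree_bounded_family F q C" and Bs: "\<forall>B\<in>set Bs. finite B \<and> card B \<le> L"
    and R: "finite R" and rt: "rt < k + length Bs" and kr: "2 \<le> k + length Bs"
    and bound: "card R + sum (weight q ({..<k} - {rt}) (\<lambda>v. Bs ! (v - k))) ({..<k + length Bs} - {rt})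
      \<le> M"
  shows "card {Ks. length Ks = k \<and> set Ks \<subseteq> F \<and> (Ks @ Bs) ! rt = R \<and> inter_graph_connected (Ks @ Bs)}
    \<le> C ^ card ({..<k} - {rt}) * card R * M ^ (k + length Bs - 2)"
proof -
  let ?A = "{Ks. length Ks = k \<and> set Ks \<subseteq> F \<and> (Ks @ Bs) ! rt = R \<and> inter_graph_connected (Ks @ Bs)}"
  let ?V = "{..<k + length Bs} - {rt}"
  let ?I = "{..<k} - {rt}"
  have "card ?A \<le> C ^ card ?I * card R * M ^ (card ?V - 1)"
  proof (rule card_connected_lists_le[OF fam R, where D = "{}" and B = "\<lambda>v. Bs ! (v - k)"])
    show "card R + sum (weight q ?I (\<lambda>v. Bs ! (v - k))) ?V \<le> M" by (rule bound)
    show "?V = {..<k + length Bs} - {rt}" ..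
    have "(if rt = 0 then 1 else 0) \<in> ?V" using rt kr by auto
    then show "?V \<noteq> {}" by blast
    show "?I \<subseteq> ?V" "rt < k + length Bs" using rt by auto
    show "\<forall>v\<in>?V - ?I. finite (Bs ! (v - k))"
    proof
      fix v assume "v \<in> ?V - ?I"
      then have "v - k < length Bs" by auto
      then show "finite (Bs ! (v - k))" using Bs by simp
    qed
    show "inj_on (\<lambda>Ks. Ks @ Bs) ?A" by (rule inj_onI) simp
  next
    fix Ks assume "Ks \<in> ?A"
    then have Ks: "length Ks = k" "set Ks \<subseteq> F" "(Ks @ Bs) ! rt = R" "inter_graph_connected (Ks @ Bs)"
      by auto
    show "length (Ks @ Bs) = k + length Bs \<and> inter_graph_connected (Ks @ Bs)"
      using Ks by simp
    show "(Ks @ Bs) ! d = R" if "d \<in> {rt}" for d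
      using that Ks by simp
    show "(Ks @ Bs) ! i \<in> F" if "i \<in> ?I" for i
      using that Ks by (auto simp: nth_append)
    show "(Ks @ Bs) ! v = Bs ! (v - k)" if "v \<in> ?V - ?I" for v
      using that Ks by (auto simp: nth_append)
  qed
  then show ?thesis using rt by (simp add: numeral_2_eq_2)
qed

lemma card_connected_through_le:
  assumes fam: "degree_bounded_family F q C" and Bs: "\<forall>B\<in>set Bs. finite B \<and> card B \<le> L"
    and v: "v < k + length Bs" and kr: "2 \<le> k + length Bs"
  shows "card {Ks. length Ks = k \<and> set Ks \<subseteq> F \<and> x \<in> (Ks @ Bs) ! v \<and> inter_graph_connected (Ks @ Bs)}
    \<le> C ^ k * weight q {..<k} (\<lambda>w. Bs ! (w - k)) v * (k * q + length Bs * L) ^ (k + length Bs - 2)"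
proof -
  interpret degree_bounded_family F q C by (rule fam)
  let ?r = "length Bs"
  let ?M = "k * q + ?r * L"
  let ?B = "\<lambda>w. Bs ! (w - k)"
  let ?rooted = "\<lambda>R. {Ks. length Ks = k \<and> set Ks \<subseteq> F \<and> (Ks @ Bs) ! v = R \<and>
    inter_graph_connected (Ks @ Bs)}"
  let ?A = "{Ks. length Ks = k \<and> set Ks \<subseteq> F \<and> x \<in> (Ks @ Bs) ! v \<and> inter_graph_connected (Ks @ Bs)}"
  show ?thesis
  proof (cases "v < k")
    case True
    have VI: "({..<k + ?r} - {v}) - ({..<k} - {v}) = {k..<k + ?r}" using True by auto
    have "sum (weight q ({..<k} - {v}) ?B) ({..<k + ?r} - {v})
        \<le> q * card ({..<k} - {v}) + card (({..<k + ?r} - {v}) - ({..<k} - {v})) * L"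
      using Bs by (intro sum_weight_le) (auto simp: VI)
    then have bound: "q + sum (weight q ({..<k} - {v}) ?B) ({..<k + ?r} - {v}) \<le> ?M"
      unfolding VI using True by (cases k) (simp_all add: algebra_simps)
    have "?A = (\<Union>K\<in>{K \<in> F. x \<in> K}. ?rooted K)"
      using True by (auto simp: nth_append intro!: subsetD[OF _ nth_mem])
    then have "card ?A \<le> (\<Sum>K\<in>{K \<in> F. x \<in> K}. card (?rooted K))"
      using finite_family by (simp add: card_UN_le)
    also have "\<dots> \<le> (\<Sum>K\<in>{K \<in> F. x \<in> K}. C ^ (k - 1) * q * ?M ^ (k + ?r - 2))"
      using card_connected_rooted_le[OF fam Bs finite_member v kr] card_member bound True
      by (intro sum_mono) simp
    also have "\<dots> \<le> C * (C ^ (k - 1) * q * ?M ^ (k + ?r - 2))"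
      using degree_le by simp
    also have "\<dots> = C ^ k * weight q {..<k} ?B v * ?M ^ (k + ?r - 2)"
      using True by (cases k) (simp_all add: weight_def)
    finally show ?thesis .
  next
    case False
    then have j: "v - k < ?r" "(Ks @ Bs) ! v = Bs ! (v - k)" if "length Ks = k" for Ks
      using v that by (auto simp: nth_append)
    have I: "{..<k} - {v} = {..<k}" using False by auto
    have VI: "({..<k + ?r} - {v}) - {..<k} = {k..<k + ?r} - {v}" by auto
    have "sum (weight q {..<k} ?B) ({..<k + ?r} - {v}) = q * k + (\<Sum>w\<in>{k..<k + ?r} - {v}. card (?B w))"
      using sum_weight[of "{..<k + ?r} - {v}" "{..<k}" q ?B] False unfolding VI by fastforce
    moreover have "card (Bs ! (v - k)) + (\<Sum>w\<in>{k..<k + ?r} - {v}. card (?B w))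
        = (\<Sum>w\<in>{k..<k + ?r}. card (?B w))"
      using v False by (subst (2) sum.remove[of _ v]) auto
    moreover have "(\<Sum>w\<in>{k..<k + ?r}. card (?B w)) \<le> ?r * L"
      using sum_card_nth_le[of "{k..<k + ?r}" k Bs L] Bs by simp
    ultimately have bound: "card (Bs ! (v - k)) + sum (weight q ({..<k} - {v}) ?B) ({..<k + ?r} - {v}) \<le> ?M"
      unfolding I by (simp add: mult.commute)
    have "?A \<subseteq> ?rooted (Bs ! (v - k))"
      using j by auto
    then have "card ?A \<le> card (?rooted (Bs ! (v - k)))"
      using finite_lists_length_eq[OF finite_family, of k]
      by (intro card_mono) (auto elim: finite_subset[rotated])
    also have "\<dots> \<le> C ^ k * card (Bs ! (v - k)) * ?M ^ (k + ?r - 2)"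
      using card_connected_rooted_le[OF fam Bs _ v kr bound] Bs j False v by simp
    finally show ?thesis using False by (simp add: weight_def)
  qed
qed

lemma card_connected_covering_single_le:
  assumes fam: "degree_bounded_family F q C" and kr: "k + length Bs = 1"
  shows "card {Ks. length Ks = k \<and> set Ks \<subseteq> F \<and> x \<in> \<Union>(set Ks) \<union> \<Union>(set Bs) \<and>
      inter_graph_connected (Ks @ Bs)} \<le> C ^ k"
    (is "card ?A \<le> _")
proof (cases k)
  case 0
  then have "?A \<subseteq> {[]}" by auto
  then show ?thesis using 0 card_mono[of "{[]}" ?A] by simp
next
  case (Suc k')
  then have "k = 1" "Bs = []" using kr by auto
  then have "?A \<subseteq> (\<lambda>K. [K]) ` {K \<in> F. x \<in> K}"
    by (auto simp: length_Suc_conv)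
  moreover have "finite F" using fam by (rule degree_bounded_family.finite_family)
  ultimately have "card ?A \<le> card ((\<lambda>K. [K]) ` {K \<in> F. x \<in> K})"
    by (intro card_mono) auto
  also have "\<dots> \<le> card {K \<in> F. x \<in> K}"
    by (rule card_image_le) (simp add: \<open>finite F\<close>)
  also have "\<dots> \<le> C" using fam by (rule degree_bounded_family.degree_le)
  finally show ?thesis using \<open>k = 1\<close> by simp
qed

lemma card_connected_covering_le:
  assumes fam: "degree_bounded_family F q C" and Bs: "\<forall>B\<in>set Bs. finite B \<and> card B \<le> L"
    and kr: "1 \<le> k + length Bs"
  shows "card {Ks. length Ks = k \<and> set Ks \<subseteq> F \<and> x \<in> \<Union>(set Ks) \<union> \<Union>(set Bs) \<and>
      inter_graph_connected (Ks @ Bs)}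
    \<le> C ^ k * (k * q + length Bs * L) ^ (k + length Bs - 1)"
    (is "card ?A \<le> _")
proof (cases "k + length Bs = 1")
  case True
  then show ?thesis using card_connected_covering_single_le[OF fam True] by simp
next
  case False
  then have kr2: "2 \<le> k + length Bs" using kr by simp
  let ?r = "length Bs"
  let ?M = "k * q + ?r * L"
  let ?B = "\<lambda>w. Bs ! (w - k)"
  let ?Av = "\<lambda>v. {Ks. length Ks = k \<and> set Ks \<subseteq> F \<and> x \<in> (Ks @ Bs) ! v \<and> inter_graph_connected (Ks @ Bs)}"
  have "?A \<subseteq> (\<Union>v<k + ?r. ?Av v)"
  proof
    fix Ks assume Ks: "Ks \<in> ?A"
    then obtain Y where "Y \<in> set (Ks @ Bs)" "x \<in> Y" by auto
    then obtain v where "v < length (Ks @ Bs)" "(Ks @ Bs) ! v = Y" by (metis in_set_conv_nth)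
    then show "Ks \<in> (\<Union>v<k + ?r. ?Av v)" using Ks \<open>x \<in> Y\<close> by auto
  qed
  moreover have "finite (\<Union>v<k + ?r. ?Av v)"
    using degree_bounded_family.finite_family[OF fam]
    by (auto intro: finite_subset[OF _ finite_lists_length_eq])
  ultimately have "card ?A \<le> card (\<Union>v<k + ?r. ?Av v)"
    by (rule card_mono[rotated])
  also have "\<dots> \<le> (\<Sum>v<k + ?r. card (?Av v))"
    by (rule card_UN_le) simp
  also have "\<dots> \<le> (\<Sum>v<k + ?r. C ^ k * ?M ^ (k + ?r - 2) * weight q {..<k} ?B v)"
    using card_connected_through_le[OF fam Bs _ kr2] by (intro sum_mono) (simp add: mult_ac)
  also have "\<dots> = C ^ k * ?M ^ (k + ?r - 2) * sum (weight q {..<k} ?B) {..<k + ?r}"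
    by (simp add: sum_distrib_left)
  also have "\<dots> \<le> C ^ k * ?M ^ (k + ?r - 2) * ?M"
    using sum_weight_le[of "{..<k + ?r}" "{..<k}" k Bs L q] Bs
    by (intro mult_left_mono) (auto simp: mult.commute)
  also have "\<dots> = C ^ k * ?M ^ (k + ?r - 1)"
  proof -
    have "k + ?r - 1 = Suc (k + ?r - 2)" using kr2 by simp
    then show ?thesis by (simp add: mult_ac)
  qed
  finally show ?thesis .
qed

lemma nth_insert_at:
  assumes "m \<le> length Ts"
  shows "(take m Ts @ K # drop m Ts) ! i = (if i < m then Ts ! i else if i = m then K else Ts ! (i - 1))"
  using assms by (auto simp: nth_append min_def nth_Cons' nth_drop)

lemma inj_on_insert_at: "inj_on (\<lambda>Ts. take m Ts @ K # drop m Ts) {Ts. m \<le> length Ts}"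
proof (rule inj_onI)
  fix Ts Ts' assume "Ts \<in> {Ts. m \<le> length Ts}" "Ts' \<in> {Ts. m \<le> length Ts}"
    and "take m Ts @ K # drop m Ts = take m Ts' @ K # drop m Ts'"
  then have "take m Ts = take m Ts'" "drop m Ts = drop m Ts'"
    using append_eq_append_conv[of "take m Ts" "take m Ts'"] by auto
  then show "Ts = Ts'" by (metis append_take_drop_id)
qed

lemma card_connected_extensions_repeated_le:
  assumes fam: "degree_bounded_family F q C" and Bs: "\<forall>B\<in>set Bs. finite B \<and> card B \<le> L"
    and K: "K \<in> F" and e: "2 \<le> e" "e \<le> k" and kr: "3 \<le> k + length Bs"
  shows "card {Ts. length Ts = k - 2 \<and> set Ts \<subseteq> F \<and>
      inter_graph_connected ((K # (take (e - 2) Ts @ K # drop (e - 2) Ts)) @ Bs)}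
    \<le> C ^ (k - 2) * q * (k * q + length Bs * L) ^ (k + length Bs - 3)"
proof -
  interpret degree_bounded_family F q C by (rule fam)
  let ?r = "length Bs"
  let ?X = "\<lambda>Ts. take (e - 2) Ts @ K # drop (e - 2) Ts"
  let ?LL = "\<lambda>Ts. (K # ?X Ts) @ Bs"
  let ?A = "{Ts. length Ts = k - 2 \<and> set Ts \<subseteq> F \<and> inter_graph_connected (?LL Ts)}"
  let ?V = "{..<k + ?r} - {0, e - 1}"
  let ?I = "{1..<k} - {e - 1}"
  have VI: "?V - ?I = {k..<k + ?r}" using e by auto
  have cI: "card ?I = k - 2" using e by (subst card_Diff_singleton) auto
  have cV: "card ?V = k + ?r - 2" using e by (simp add: card_Diff_subset)
  have nth_LL: "?LL Ts ! i = (if i = 0 then K else if i < k then ?X Ts ! (i - 1) else Bs ! (i - k))"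
    if "length Ts = k - 2" for Ts i
    using that e by (intro nth_Cons_append) auto
  have nth_X: "?X Ts ! i = (if i < e - 2 then Ts ! i else if i = e - 2 then K else Ts ! (i - 1))"
    if "length Ts = k - 2" for Ts i
    using that e by (intro nth_insert_at) simp
  have "card ?A \<le> C ^ card ?I * card K * (k * q + ?r * L) ^ (card ?V - 1)"
  proof (rule card_connected_lists_le[OF fam, where rt = 0 and D = "{e - 1}" and B = "\<lambda>v. Bs ! (v - k)"])
    show "finite K" using K by (rule finite_member)
    show "?V = {..<k + ?r} - insert 0 {e - 1}" by simp
    have "(if e = 2 then 2 else 1) \<in> ?V" using e kr by auto
    then show "?V \<noteq> {}" by blast
    show "inj_on ?LL ?A"
      using inj_on_insert_at[of "e - 2" K] e by (auto simp: inj_on_def)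
    show "?I \<subseteq> ?V" "0 < k + ?r" using e by auto
    show "\<forall>v\<in>?V - ?I. finite (Bs ! (v - k))"
      using Bs unfolding VI by (auto simp: less_diff_conv2)
    have "sum (weight q ?I (\<lambda>v. Bs ! (v - k))) ?V \<le> q * card ?I + card (?V - ?I) * L"
      using Bs by (intro sum_weight_le) (auto simp: VI)
    also have "\<dots> = q * (k - 2) + ?r * L"
      unfolding VI cI by simp
    also have "q + (q * (k - 2) + ?r * L) \<le> k * q + ?r * L"
    proof -
      obtain k' where "k = k' + 2" using e by (metis le_add_diff_inverse2 order_trans)
      then show ?thesis by (simp add: algebra_simps)
    qed
    finally show "card K + sum (weight q ?I (\<lambda>v. Bs ! (v - k))) ?V \<le> k * q + ?r * L"
      using card_member[OF K] by simp
  next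
    fix Ts assume "Ts \<in> ?A"
    then have Ts: "length Ts = k - 2" "set Ts \<subseteq> F" "inter_graph_connected (?LL Ts)" by auto
    show "length (?LL Ts) = k + ?r \<and> inter_graph_connected (?LL Ts)"
      using Ts e by simp
    show "?LL Ts ! d = K" if "d \<in> insert 0 {e - 1}" for d
      using that nth_LL[OF Ts(1), of d] nth_X[OF Ts(1), of "e - 2"] e by (auto simp: numeral_2_eq_2)
    show "?LL Ts ! i \<in> F" if "i \<in> ?I" for i
    proof -
      have "?LL Ts ! i = ?X Ts ! (i - 1)" using that nth_LL[OF Ts(1), of i] by simp
      moreover have "length (?X Ts) = k - 1" using Ts(1) e by auto
      then have "i - 1 < length (?X Ts)" using that by auto
      ultimately have "?LL Ts ! i \<in> set (?X Ts)" by (metis nth_mem)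
      moreover have "set (?X Ts) \<subseteq> F"
        using Ts(2) K set_take_subset[of "e - 2" Ts] set_drop_subset[of "e - 2" Ts] by auto
      ultimately show ?thesis by blast
    qed
    show "?LL Ts ! v = Bs ! (v - k)" if "v \<in> ?V - ?I" for v
      using that nth_LL[OF Ts(1), of v] by auto
  qed
  then show ?thesis using card_member[OF K] cI cV by (simp add: mult_ac numeral_2_eq_2 numeral_3_eq_3)
qed

lemma power_int_diff_of_nat:
  fixes x :: real
  assumes "c \<le> n"
  shows "x powi (int n - int c) = x ^ (n - c)"
proof -
  have "int n - int c = int (n - c)" using assms by simp
  then show ?thesis by (simp only: power_int_of_nat)
qed

lemma card_connected_covering_le_powi:
  assumes fam: "degree_bounded_family F q C" and Bs: "\<forall>B\<in>set Bs. finite B \<and> card B \<le> L"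
  shows "real (card {Ks. length Ks = k \<and> set Ks \<subseteq> F \<and> x \<in> \<Union>(set Ks) \<union> \<Union>(set Bs) \<and>
      inter_graph_connected (Ks @ Bs)})
    \<le> real C ^ k * real (k * q + length Bs * L) powi (int (k + length Bs) - 1)"
    (is "real (card ?A) \<le> _")
proof (cases "k + length Bs = 0")
  case True
  then have "?A = {}" by auto
  then show ?thesis unfolding \<open>?A = {}\<close> using True by simp
next
  case False
  then have kr: "1 \<le> k + length Bs" by linarith
  have "real (card ?A) \<le> real C ^ k * real (k * q + length Bs * L) ^ (k + length Bs - 1)"
    using card_connected_covering_le[OF fam Bs kr, of x]
    by (simp only: of_nat_mult[symmetric] of_nat_power[symmetric] of_nat_le_iff)
  then show ?thesis using power_int_diff_of_nat[OF kr] by simp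
qed

lemma card_connected_extensions_le_powi:
  assumes fam: "degree_bounded_family F q C" and Bs: "\<forall>B\<in>set Bs. finite B \<and> card B \<le> L"
    and q: "1 \<le> q" and K: "K \<in> F" and k: "1 \<le> k"
  shows "real (card {Ks. length Ks = k - 1 \<and> set Ks \<subseteq> F \<and> inter_graph_connected ((K # Ks) @ Bs)})
    \<le> real q * real C ^ (k - 1) * real (k * q + length Bs * L) powi (int (k + length Bs) - 2)"
    (is "real (card ?A) \<le> _")
proof (cases "k + length Bs = 1")
  case True
  then have "k = 1" "length Bs = 0" using k by linarith+
  then have "?A \<subseteq> {[]}" by auto
  then have "card ?A \<le> 1" using card_mono[of "{[]}" ?A] by simp
  then show ?thesis using \<open>k = 1\<close> \<open>length Bs = 0\<close> q by simp
next
  case False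
  then have kr: "2 \<le> k + length Bs" using k by linarith
  have "real (card ?A) \<le> real C ^ (k - 1) * real q * real (k * q + length Bs * L) ^ (k + length Bs - 2)"
    using card_connected_extensions_le[OF fam Bs K k kr]
    by (simp only: of_nat_mult[symmetric] of_nat_power[symmetric] of_nat_le_iff)
  then show ?thesis using power_int_diff_of_nat[OF kr] by (simp add: mult_ac)
qed

lemma card_connected_extensions_repeated:
  assumes fam: "degree_bounded_family F q C" and Bs: "\<forall>B\<in>set Bs. finite B \<and> card B \<le> L"
    and q: "1 \<le> q" and K: "K \<in> F" and e: "e \<in> {2..k}"
  shows "let N = card {Ts. length Ts = k - 2 \<and> set Ts \<subseteq> F \<and>
      inter_graph_connected ((K # (take (e - 2) Ts @ K # drop (e - 2) Ts)) @ Bs)}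
    in (k + length Bs = 2 \<longrightarrow> N = 1) \<and>
       (3 \<le> k + length Bs \<longrightarrow>
          real N \<le> real q * real C ^ (k - 2) * real (k * q + length Bs * L) ^ (k + length Bs - 3))"
    (is "Let (card ?A) _")
  unfolding Let_def
proof (intro conjI impI)
  assume "k + length Bs = 2"
  moreover have "2 \<le> e" "e \<le> k" using e by auto
  ultimately have "k = 2" "e = 2" "length Bs = 0" by linarith+
  moreover have "K \<noteq> {}"
    using q degree_bounded_family.card_member[OF fam K] by (metis card.empty not_one_le_zero)
  ultimately have "inter_graph_connected ((K # (take (e - 2) [] @ K # drop (e - 2) [])) @ Bs)"
    by (simp add: inter_graph_connected_pair)
  then have "?A = {[]}" using \<open>k = 2\<close> by auto
  then show "card ?A = 1" by simp
next
  assume "3 \<le> k + length Bs"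
  from card_connected_extensions_repeated_le[OF fam Bs K _ _ this, of e] e
  have "card ?A \<le> q * C ^ (k - 2) * (k * q + length Bs * L) ^ (k + length Bs - 3)"
    by (simp add: mult_ac)
  then show "real (card ?A)
      \<le> real q * real C ^ (k - 2) * real (k * q + length Bs * L) ^ (k + length Bs - 3)"
    by (simp only: of_nat_mult[symmetric] of_nat_power[symmetric] of_nat_le_iff)
qed

lemma card_connected_extensions_from_fixed:
  assumes fam: "degree_bounded_family F q C" and Bs: "\<forall>B\<in>set Bs. finite B \<and> card B \<le> L"
    and q: "1 \<le> q" and j: "j < length Bs" "Bs ! j \<in> F" and k: "1 \<le> k"
  shows "let N = card {Ks. length Ks = k - 1 \<and> set Ks \<subseteq> F \<and> inter_graph_connected ((Bs ! j # Ks) @ Bs)}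
    in (k + length Bs = 2 \<longrightarrow> N = 1) \<and>
       (3 \<le> k + length Bs \<longrightarrow>
          real N \<le> real q * real C ^ (k - 1) * real (k * q + length Bs * L) ^ (k + length Bs - 3))"
    (is "Let (card ?A) _")
  unfolding Let_def
proof (intro conjI impI)
  assume "k + length Bs = 2"
  then have "k = 1" "length Bs = 1" using j k by linarith+
  then have "(Bs ! j # []) @ Bs = [Bs ! j, Bs ! j]" using j by (cases Bs) auto
  moreover have "Bs ! j \<noteq> {}"
    using q degree_bounded_family.card_member[OF fam j(2)] by (metis card.empty not_one_le_zero)
  ultimately have "inter_graph_connected ((Bs ! j # []) @ Bs)"
    by (metis inter_graph_connected_pair)
  then have "?A = {[]}" using \<open>k = 1\<close> by auto
  then show "card ?A = 1" by simp
next
  assume "3 \<le> k + length Bs"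
  from card_connected_extensions_from_fixed_le[OF fam Bs j k this]
  have "card ?A \<le> q * C ^ (k - 1) * (k * q + length Bs * L) ^ (k + length Bs - 3)"
    by (simp add: mult_ac)
  then show "real (card ?A)
      \<le> real q * real C ^ (k - 1) * real (k * q + length Bs * L) ^ (k + length Bs - 3)"
    by (simp only: of_nat_mult[symmetric] of_nat_power[symmetric] of_nat_le_iff)
qed

section \<open>The q-subsets of [n]\<close>

lemma card_qsets_containing_le: "card {K \<in> qsets n q. u \<in> K} \<le> n - 1 choose (q - 1)"
proof (cases "u \<in> {1..n}")
  case False
  then have "{K \<in> qsets n q. u \<in> K} = {}" unfolding qsets_def by auto
  then show ?thesis by (metis card.empty le0)
next
  case True
  let ?T = "{B. B \<subseteq> {1..n} - {u} \<and> card B = q - 1}"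
  have "inj_on (\<lambda>K. K - {u}) {K \<in> qsets n q. u \<in> K}"
    by (rule inj_onI) (metis (no_types, lifting) insert_Diff mem_Collect_eq)
  moreover have "(\<lambda>K. K - {u}) ` {K \<in> qsets n q. u \<in> K} \<subseteq> ?T"
    unfolding qsets_def using finite_subset by (auto simp: card_Diff_singleton)
  moreover have "finite ?T" by (rule finite_subset[of _ "Pow {1..n}"]) auto
  ultimately have "card {K \<in> qsets n q. u \<in> K} \<le> card ?T" by (rule card_inj_on_le)
  also have "card ?T = n - 1 choose (q - 1)" using True by (subst n_subsets) auto
  finally show ?thesis .
qed

lemma degree_bounded_family_qsets: "degree_bounded_family (qsets n q) q (n - 1 choose (q - 1))"
proof
  show "finite (qsets n q)"
    unfolding qsets_def by (rule finite_subset[of _ "Pow {1..n}"]) auto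
  show "finite K" "card K = q" if "K \<in> qsets n q" for K
    using that finite_subset unfolding qsets_def by auto
  show "card {K \<in> qsets n q. u \<in> K} \<le> n - 1 choose (q - 1)" for u
    by (rule card_qsets_containing_le)
qed

theorem mainTheorem7:
  fixes n q L r k :: nat and Bs :: "nat set list"
  assumes "1 \<le> q" and "q \<le> n" and "1 \<le> L"
    and "length Bs = r"
    and "\<forall>B\<in>set Bs. B \<subseteq> {1..n} \<and> card B \<le> L"
  shows
  "(\<forall>x\<in>{1..n}.
      real (card {Ks. length Ks = k \<and> set Ks \<subseteq> qsets n q \<and>
                    x \<in> \<Union>(set Ks) \<union> \<Union>(set Bs) \<and>
                    inter_graph_connected (Ks @ Bs)})
      \<le> real (n - 1 choose (q - 1)) ^ k * real (k * q + r * L) powi (int (k + r) - 1))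
   \<and> (k \<ge> 1 \<longrightarrow> (\<forall>K1\<in>qsets n q.
      real (card {Ks. length Ks = k - 1 \<and> set Ks \<subseteq> qsets n q \<and>
                    inter_graph_connected ((K1 # Ks) @ Bs)})
      \<le> real q * real (n - 1 choose (q - 1)) ^ (k - 1)
           * real (k * q + r * L) powi (int (k + r) - 2)))
   \<and> (k \<ge> 2 \<longrightarrow> (\<forall>e\<in>{2..k}. \<forall>K1\<in>qsets n q.
      (let C = card {Ts. length Ts = k - 2 \<and> set Ts \<subseteq> qsets n q \<and>
                    inter_graph_connected
                      ((K1 # (take (e - 2) Ts @ K1 # drop (e - 2) Ts)) @ Bs)}
       in (k + r = 2 \<longrightarrow> C = 1) \<and>
          (k + r \<ge> 3 \<longrightarrow> real C \<le> real q * real (n - 1 choose (q - 1)) ^ (k - 2)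
                                * real (k * q + r * L) ^ (k + r - 3)))))
   \<and> (k \<ge> 1 \<and> r \<ge> 1 \<longrightarrow> (\<forall>f\<in>{1..r}. Bs ! (f - 1) \<in> qsets n q \<longrightarrow>
      (let C = card {Ks. length Ks = k - 1 \<and> set Ks \<subseteq> qsets n q \<and>
                    inter_graph_connected ((Bs ! (f - 1) # Ks) @ Bs)}
       in (k + r = 2 \<longrightarrow> C = 1) \<and>
          (k + r \<ge> 3 \<longrightarrow> real C \<le> real q * real (n - 1 choose (q - 1)) ^ (k - 1)
                                * real (k * q + r * L) ^ (k + r - 3)))))"
proof -
  have fam: "degree_bounded_family (qsets n q) q (n - 1 choose (q - 1))"
    by (rule degree_bounded_family_qsets)
  have Bs: "\<forall>B\<in>set Bs. finite B \<and> card B \<le> L"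
    using assms(5) finite_subset by blast
  have "f - 1 < length Bs" if "f \<in> {1..r}" for f
    using that assms(4) by auto
  then show ?thesis
    using card_connected_covering_le_powi[OF fam Bs]
      card_connected_extensions_le_powi[OF fam Bs assms(1)]
      card_connected_extensions_repeated[OF fam Bs assms(1)]
      card_connected_extensions_from_fixed[OF fam Bs assms(1)]
    unfolding assms(4)[symmetric] by blast
qed

end
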